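(* Let $q\ge1$, $d\ge1$, and $\mathcal{D}=\{(b_1,B_1),\ldots,(b_d,B_d)\}\subseteq[q]\times2^{[q]}$ with $|B_i|\ge2$ for all $i\in[d]$. Then $\mathcal{E}_{\mathcal{D}}=\mathcal{E}_{\mathcal{D}^\circ}=\mathcal{E}_{\overline{\mathcal{D}}}=\mathcal{E}_{\min(\mathcal{D})}=\mathcal{E}_{\min(\overline{\mathcal{D}})}=\mathcal{E}_{\min(\mathcal{D}^\circ)}$.
   Context: With $\Lambda=[q]$: a pair $(b,B)$ is trivial if $b\in B$; $(b,B)^{\sf ex}=\{(b,C):B\subseteq C\subseteq\Lambda\}$; $(b,B)\circ(c,C)=(b,(B\smallsetminus\{c\})\cup C)$; for a set $\mathcal{D}$ of pairs, $\mathcal{D}^\circ$ is the set of all compositions $(c_1,C_1)\circ\cdots\circ(c_s,C_s)$, $s\ge1$, $(c_i,C_i)\in\mathcal{D}$, with all possible bracketings; $\mathcal{D}^{\sf ex}$ is the union of extensions of elements of $\mathcal{D}$; $\Lambda^{\sf triv}=\{(b,B):b\in B\}$; $\overline{\mathcal{D}}=(\mathcal{D}^\circ)^{\sf ex}\cup\Lambda^{\sf triv}$; $\min(\mathcal{D})$ is the set of nontrivial $(b,B)\in\mathcal{D}$ such that no $(b,C)\in\mathcal{D}$ has $C\subsetneq B$. $\mathcal{D}$-extremal ideals: $S_{[q]}=\mathsf k[y_A:\emptyset\ne A\subseteq[q]]$ over a field $\mathsf k$; for $\mathcal{D}'\subseteq[q]\times(2^{[q]}\smallsetminus\{\emptyset\})$,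 $Q(\mathcal{D}')=\{A\subseteq[q]:A\ne\emptyset,\ A\cap B\ne\emptyset\text{ for all }(b,B)\in\mathcal{D}'\text{ with }b\in A\}$, $\varepsilon_{\mathcal{D}',i}=\prod_{A\in Q(\mathcal{D}'),\,i\in A}y_A$, and $\mathcal{E}_{\mathcal{D}'}=(\varepsilon_{\mathcal{D}',1},\ldots,\varepsilon_{\mathcal{D}',q})$. *)

theory Defs
  imports "HOL-Library.Poly_Mapping"
begin

type_synonym pair = "nat \<times> nat set"

definition Lam :: "nat \<Rightarrow> nat set" where
  "Lam q = {1..q}"

definition trivial_pair :: "pair \<Rightarrow> bool" where
  "trivial_pair p \<longleftrightarrow> fst p \<in> snd p"

definition comp_pair :: "pair \<Rightarrow> pair \<Rightarrow> pair" (infixl "\<circ>\<^sub>p" 70) where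
  "comp_pair p r = (fst p, (snd p - {fst r}) \<union> snd r)"

inductive_set comp_closure :: "pair set \<Rightarrow> pair set" for D where
  base: "p \<in> D \<Longrightarrow> p \<in> comp_closure D"
| comp: "p \<in> comp_closure D \<Longrightarrow> r \<in> comp_closure D \<Longrightarrow> comp_pair p r \<in> comp_closure D"

definition ext_pair :: "nat \<Rightarrow> pair \<Rightarrow> pair set" where
  "ext_pair q p = {(fst p, C) | C. snd p \<subseteq> C \<and> C \<subseteq> Lam q}"

definition ext_set :: "nat \<Rightarrow> pair set \<Rightarrow> pair set" where
  "ext_set q D = (\<Union>p\<in>D. ext_pair q p)"

definition triv_set :: "nat \<Rightarrow> pair set" where
  "triv_set q = {(b, B). B \<subseteq> Lam q \<and> b \<in> B}"

definition closure_bar :: "nat \<Rightarrow> pair set \<Rightarrow> pair set" where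
  "closure_bar q D = ext_set q (comp_closure D) \<union> triv_set q"

definition min_pairs :: "pair set \<Rightarrow> pair set" where
  "min_pairs D = {(b, B) \<in> D. b \<notin> B \<and> \<not> (\<exists>C. (b, C) \<in> D \<and> C \<subset> B)}"

text \<open>The polynomial ring S_[q] = k[y_A : {} \<noteq> A \<subseteq> [q]], realised as the
  subring of k[y_A : A :: nat set] (poly_mapping representation) consisting of
  polynomials involving only the variables y_A with {} \<noteq> A \<subseteq> [q].\<close>
type_synonym 'k mpoly = "(nat set \<Rightarrow>\<^sub>0 nat) \<Rightarrow>\<^sub>0 'k"

definition S_ring :: "nat \<Rightarrow> ('k::field) mpoly set" where
  "S_ring q = {p :: 'k mpoly. \<forall>m \<in> Poly_Mapping.keys p. \<forall>A \<in> Poly_Mapping.keys m. A \<noteq> {} \<and> A \<subseteq> Lam q}"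

definition var_y :: "nat set \<Rightarrow> ('k::field) mpoly" where
  "var_y A = Poly_Mapping.single (Poly_Mapping.single A 1) 1"

definition ideal_gen :: "nat \<Rightarrow> ('k::field) mpoly set \<Rightarrow> 'k mpoly set" where
  "ideal_gen q G = {x. \<exists>F r. finite F \<and> F \<subseteq> G \<and> (\<forall>g\<in>F. r g \<in> S_ring q)
                         \<and> x = (\<Sum>g\<in>F. r g * g)}"

definition Qset :: "nat \<Rightarrow> pair set \<Rightarrow> nat set set" where
  "Qset q D = {A. A \<subseteq> Lam q \<and> A \<noteq> {} \<and> (\<forall>(b, B) \<in> D. b \<in> A \<longrightarrow> A \<inter> B \<noteq> {})}"

definition eps :: "nat \<Rightarrow> pair set \<Rightarrow> nat \<Rightarrow> ('k::field) mpoly" where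
  "eps q D i = (\<Prod>A \<in> {A \<in> Qset q D. i \<in> A}. var_y A)"

definition extremal_ideal :: "nat \<Rightarrow> pair set \<Rightarrow> ('k::field) mpoly set" where
  "extremal_ideal q D = ideal_gen q (eps q D ` Lam q)"

end

theory Submission
  imports Defs
begin

text \<open>The generators \<open>\<epsilon>\<^sub>D\<^sub>,\<^sub>i\<close> depend on \<open>D\<close> only through the family \<open>Q(D)\<close>, so it
  suffices to show that all six families of pairs define the same \<open>Q\<close>. A set meeting
  \<open>B\<close> and \<open>C\<close> whenever it contains \<open>b\<close> resp. \<open>c\<close> also meets \<open>(B - {c}) \<union> C\<close> whenever it
  contains \<open>b\<close>, so composition adds no constraint; a pair \<open>(b, C)\<close> is implied by any
  \<open>(b, B)\<close> with \<open>B \<subseteq> C\<close>, which takes care of extensions and, since every nontrivial pair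
  lies above a minimal one, of passing to minimal pairs; trivial pairs impose nothing.\<close>

lemma extremal_ideal_cong_Qset:
  "Qset q D = Qset q D' \<Longrightarrow> extremal_ideal q D = extremal_ideal q D'"
  by (simp add: extremal_ideal_def eps_def)

lemma Qset_meets: "A \<in> Qset q X \<Longrightarrow> (b, B) \<in> X \<Longrightarrow> b \<in> A \<Longrightarrow> A \<inter> B \<noteq> {}"
  unfolding Qset_def by fast

lemma QsetI:
  assumes "A \<subseteq> Lam q" "A \<noteq> {}" "\<And>b B. (b, B) \<in> X \<Longrightarrow> b \<in> A \<Longrightarrow> A \<inter> B \<noteq> {}"
  shows "A \<in> Qset q X"
  using assms unfolding Qset_def by fast

lemma Qset_antimono: "X \<subseteq> Y \<Longrightarrow> Qset q Y \<subseteq> Qset q X"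
  unfolding Qset_def by blast

lemma Qset_subset_if_dominated:
  assumes "\<And>b C. (b, C) \<in> Y \<Longrightarrow> b \<notin> C \<Longrightarrow> \<exists>B \<subseteq> C. (b, B) \<in> X"
  shows "Qset q X \<subseteq> Qset q Y"
proof
  fix A assume A: "A \<in> Qset q X"
  show "A \<in> Qset q Y"
  proof (rule QsetI)
    show "A \<subseteq> Lam q" "A \<noteq> {}" using A unfolding Qset_def by auto
    fix b C assume "(b, C) \<in> Y" "b \<in> A"
    show "A \<inter> C \<noteq> {}"
    proof (cases "b \<in> C")
      case True
      with \<open>b \<in> A\<close> show ?thesis by blast
    next
      case False
      with assms \<open>(b, C) \<in> Y\<close> obtain B where "B \<subseteq> C" "(b, B) \<in> X" by blast
      with Qset_meets[OF A] \<open>b \<in> A\<close> show ?thesis by blast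
    qed
  qed
qed

lemma Qset_meets_comp_closure:
  assumes "A \<in> Qset q D" "p \<in> comp_closure D" "fst p \<in> A"
  shows "A \<inter> snd p \<noteq> {}"
  using assms(2,3)
proof (induction p rule: comp_closure.induct)
  case (base p)
  then show ?case using Qset_meets[OF assms(1)] by (cases p) auto
next
  case (comp p r)
  then show ?case unfolding comp_pair_def by auto
qed

lemma Qset_comp_closure: "Qset q (comp_closure D) = Qset q D"
proof
  show "Qset q (comp_closure D) \<subseteq> Qset q D"
    by (rule Qset_antimono) (auto intro: comp_closure.base)
  show "Qset q D \<subseteq> Qset q (comp_closure D)"
  proof
    fix A assume A: "A \<in> Qset q D"
    show "A \<in> Qset q (comp_closure D)"
    proof (rule QsetI)
      show "A \<subseteq> Lam q" "A \<noteq> {}" using A unfolding Qset_def by auto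
      show "A \<inter> B \<noteq> {}" if "(b, B) \<in> comp_closure D" "b \<in> A" for b B
        using Qset_meets_comp_closure[OF A that(1)] that(2) by simp
    qed
  qed
qed

lemma comp_closure_snd_subset:
  assumes "\<forall>p\<in>D. snd p \<subseteq> Lam q" "p \<in> comp_closure D"
  shows "snd p \<subseteq> Lam q"
  using assms(2) by induction (use assms(1) in \<open>auto simp: comp_pair_def\<close>)

lemma closure_bar_snd_subset:
  assumes "\<forall>p\<in>D. snd p \<subseteq> Lam q" "p \<in> closure_bar q D"
  shows "snd p \<subseteq> Lam q"
  using assms comp_closure_snd_subset
  unfolding closure_bar_def ext_set_def ext_pair_def triv_set_def by auto

lemma comp_closure_subset_closure_bar:
  assumes "\<forall>p\<in>D. snd p \<subseteq> Lam q"
  shows "comp_closure D \<subseteq> closure_bar q D"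
  using comp_closure_snd_subset[OF assms]
  unfolding closure_bar_def ext_set_def ext_pair_def by force

lemma closure_bar_dominated:
  assumes "(b, C) \<in> closure_bar q D" "b \<notin> C"
  shows "\<exists>B \<subseteq> C. (b, B) \<in> comp_closure D"
proof -
  from assms have "(b, C) \<in> ext_set q (comp_closure D)"
    unfolding closure_bar_def triv_set_def by auto
  then obtain p where "p \<in> comp_closure D" "fst p = b" "snd p \<subseteq> C"
    unfolding ext_set_def ext_pair_def by auto
  then show ?thesis by (metis prod.collapse)
qed

lemma Qset_closure_bar:
  assumes "\<forall>p\<in>D. snd p \<subseteq> Lam q"
  shows "Qset q (closure_bar q D) = Qset q D"
proof
  show "Qset q (closure_bar q D) \<subseteq> Qset q D"
    using Qset_antimono[OF comp_closure_subset_closure_bar[OF assms]]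
    by (simp add: Qset_comp_closure)
  show "Qset q D \<subseteq> Qset q (closure_bar q D)"
    using Qset_subset_if_dominated[OF closure_bar_dominated]
    by (simp add: Qset_comp_closure)
qed

lemma min_pairs_below:
  assumes "(b, B) \<in> X" "b \<notin> B" "finite B"
  obtains C where "(b, C) \<in> min_pairs X" "C \<subseteq> B"
proof -
  let ?Cs = "{C. (b, C) \<in> X \<and> C \<subseteq> B}"
  have "finite ?Cs"
    using \<open>finite B\<close> by (auto intro: finite_subset[of _ "Pow B"])
  then obtain C where "C \<in> ?Cs" and C_min: "\<forall>C'\<in>?Cs. C' \<subseteq> C \<longrightarrow> C = C'"
    using finite_has_minimal2[of ?Cs B] assms(1) by auto
  then have "(b, C) \<in> min_pairs X"
    using \<open>b \<notin> B\<close> unfolding min_pairs_def by auto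
  with \<open>C \<in> ?Cs\<close> show thesis using that by blast
qed

lemma Qset_min_pairs:
  assumes "\<forall>p\<in>X. finite (snd p)"
  shows "Qset q (min_pairs X) = Qset q X"
proof
  show "Qset q X \<subseteq> Qset q (min_pairs X)"
    by (rule Qset_antimono) (auto simp: min_pairs_def)
  show "Qset q (min_pairs X) \<subseteq> Qset q X"
  proof (rule Qset_subset_if_dominated)
    fix b C assume "(b, C) \<in> X" "b \<notin> C"
    moreover from assms \<open>(b, C) \<in> X\<close> have "finite C" by auto
    ultimately obtain B where "(b, B) \<in> min_pairs X" "B \<subseteq> C"
      by (rule min_pairs_below)
    then show "\<exists>B \<subseteq> C. (b, B) \<in> min_pairs X" by blast
  qed
qed

theorem lemma3p10:
  fixes q d :: nat and b :: "nat \<Rightarrow> nat" and B :: "nat \<Rightarrow> nat set" and D :: "pair set"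
  assumes "q \<ge> 1" and "d \<ge> 1"
    and "D = (\<lambda>i. (b i, B i)) ` {1..d}"
    and "\<forall>i\<in>{1..d}. b i \<in> Lam q \<and> B i \<subseteq> Lam q"
    and "\<forall>i\<in>{1..d}. card (B i) \<ge> 2"
  shows "(extremal_ideal q D :: ('k::field) mpoly set) = extremal_ideal q (comp_closure D)
       \<and> extremal_ideal q (comp_closure D) = (extremal_ideal q (closure_bar q D) :: 'k mpoly set)
       \<and> extremal_ideal q (closure_bar q D) = (extremal_ideal q (min_pairs D) :: 'k mpoly set)
       \<and> extremal_ideal q (min_pairs D) = (extremal_ideal q (min_pairs (closure_bar q D)) :: 'k mpoly set)
       \<and> extremal_ideal q (min_pairs (closure_bar q D)) = (extremal_ideal q (min_pairs (comp_closure D)) :: 'k mpoly set)"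
proof -
  have D_sub: "\<forall>p\<in>D. snd p \<subseteq> Lam q" using assms(3,4) by auto
  have finite_snd: "\<forall>p\<in>X. finite (snd p)" if "\<forall>p\<in>X. snd p \<subseteq> Lam q" for X :: "pair set"
    using that by (metis Lam_def finite_atLeastAtMost finite_subset)
  have comp_sub: "\<forall>p\<in>comp_closure D. snd p \<subseteq> Lam q"
    using D_sub comp_closure_snd_subset by blast
  have bar_sub: "\<forall>p\<in>closure_bar q D. snd p \<subseteq> Lam q"
    using D_sub closure_bar_snd_subset by blast
  have "Qset q (comp_closure D) = Qset q D" "Qset q (closure_bar q D) = Qset q D"
    "Qset q (min_pairs D) = Qset q D" "Qset q (min_pairs (closure_bar q D)) = Qset q D"
    "Qset q (min_pairs (comp_closure D)) = Qset q D"
    using D_sub comp_sub bar_sub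
    by (simp_all add: finite_snd Qset_min_pairs Qset_closure_bar Qset_comp_closure)
  then show ?thesis
    by (intro conjI extremal_ideal_cong_Qset) simp_all
qed

end
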